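(* Let $0<\varepsilon\le 1$, $\gamma>1$, and consider the auxiliary (non-stiff) system $U_t+\nabla\cdot\hat F(U)=0$ in $\mathbb R^d$, where $U=(\rho,\rho\mathbf u,\rho E)$ and $$\hat F(U)=\begin{pmatrix}\rho\mathbf u\\ \rho\mathbf u\otimes\mathbf u+p\,\mathrm{Id}\\ (\rho E+\Pi)\mathbf u\end{pmatrix},\qquad \Pi=\varepsilon^2p+(1-\varepsilon^2)p_\infty,\quad p_\infty(t)=\inf_{\mathbf x}p(\mathbf x,t),$$ with $p=(\gamma-1)\big(\rho E-\tfrac{\varepsilon^2}{2}\rho\|\mathbf u\|^2\big)$. Suppose the data $(\rho,\mathbf u,p)$ at time $t$ are well prepared, i.e. $\nabla\cdot\mathbf u(\mathbf x,t)=0$ and $\nabla p(\mathbf x,t)=0$. Then the solution of the auxiliary system at time $t+\Delta t$ satisfies $$\nabla\cdot\mathbf u(\mathbf x,t+\Delta t)=\mathcal O(\Delta t),\qquad \nabla p(\mathbf x,t+\Delta t)=\mathcal O(\Delta t^2).$$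
   Context: The auxiliary system is the non-stiff part of Klein's splitting $F=\hat F+\tilde F$ of the nondimensionalised compressible Euler flux $F(U)=(\rho\mathbf u,\rho\mathbf u\otimes\mathbf u+\frac{p}{\varepsilon^2}\mathrm{Id},(\rho E+p)\mathbf u)$, where $\varepsilon$ is the reference Mach number, $\rho$ density, $\mathbf u$ velocity, $E$ total specific energy, $p$ pressure. Solutions are assumed smooth so that Taylor expansion in time is valid. *)

theory Defs
  imports "HOL-Analysis.Analysis" "HOL-Library.Landau_Symbols"
begin

definition dx :: "'d::finite \<Rightarrow> (real^'d \<Rightarrow> real \<Rightarrow> real) \<Rightarrow> real^'d \<Rightarrow> real \<Rightarrow> real" where
  "dx i f x s = deriv (\<lambda>h. f (x + h *\<^sub>R axis i 1) s) 0"

definition dt :: "(real^'d \<Rightarrow> real \<Rightarrow> real) \<Rightarrow> real^'d \<Rightarrow> real \<Rightarrow> real" where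
  "dt f x s = deriv (\<lambda>r. f x r) s"

fun iter_partial :: "'d::finite option list \<Rightarrow> (real^'d \<Rightarrow> real \<Rightarrow> real) \<Rightarrow> real^'d \<Rightarrow> real \<Rightarrow> real" where
  "iter_partial [] f = f"
| "iter_partial (None # ds) f = dt (iter_partial ds f)"
| "iter_partial (Some i # ds) f = dx i (iter_partial ds f)"

definition smooth_on :: "real set \<Rightarrow> (real^'d::finite \<Rightarrow> real \<Rightarrow> real) \<Rightarrow> bool" where
  "smooth_on I f \<longleftrightarrow> (\<forall>ds x s. s \<in> I \<longrightarrow>
      (\<lambda>z. iter_partial ds f (fst z) (snd z)) differentiable (at (x, s)))"

definition div_field :: "(real^'d::finite \<Rightarrow> real \<Rightarrow> real^'d) \<Rightarrow> real^'d \<Rightarrow> real \<Rightarrow> real" where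
  "div_field u x s = (\<Sum>j\<in>UNIV. dx j (\<lambda>y r. u y r $ j) x s)"

definition grad :: "(real^'d::finite \<Rightarrow> real \<Rightarrow> real) \<Rightarrow> real^'d \<Rightarrow> real \<Rightarrow> real^'d" where
  "grad f x s = (\<chi> i. dx i f x s)"

text \<open>Total energy \<open>\<rho>E\<close> from the equation of state
  \<open>p = (\<gamma>-1)(\<rho>E - \<epsilon>^2/2 \<rho>|u|^2)\<close>.\<close>
definition rhoE :: "real \<Rightarrow> real \<Rightarrow> (real^'d::finite \<Rightarrow> real \<Rightarrow> real) \<Rightarrow>
    (real^'d \<Rightarrow> real \<Rightarrow> real^'d) \<Rightarrow> (real^'d \<Rightarrow> real \<Rightarrow> real) \<Rightarrow> real^'d \<Rightarrow> real \<Rightarrow> real" where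
  "rhoE \<gamma> \<epsilon> \<rho> u p x s = p x s / (\<gamma> - 1) + \<epsilon>\<^sup>2 / 2 * \<rho> x s * (norm (u x s))\<^sup>2"

definition p_inf :: "(real^'d::finite \<Rightarrow> real \<Rightarrow> real) \<Rightarrow> real \<Rightarrow> real" where
  "p_inf p s = Inf (range (\<lambda>y. p y s))"

definition Pi_aux :: "real \<Rightarrow> (real^'d::finite \<Rightarrow> real \<Rightarrow> real) \<Rightarrow> real^'d \<Rightarrow> real \<Rightarrow> real" where
  "Pi_aux \<epsilon> p x s = \<epsilon>\<^sup>2 * p x s + (1 - \<epsilon>\<^sup>2) * p_inf p s"

definition aux_system :: "real \<Rightarrow> real \<Rightarrow> real set \<Rightarrow> (real^'d::finite \<Rightarrow> real \<Rightarrow> real) \<Rightarrow>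
    (real^'d \<Rightarrow> real \<Rightarrow> real^'d) \<Rightarrow> (real^'d \<Rightarrow> real \<Rightarrow> real) \<Rightarrow> bool" where
  "aux_system \<gamma> \<epsilon> I \<rho> u p \<longleftrightarrow> (\<forall>x. \<forall>s\<in>I.
     dt \<rho> x s + (\<Sum>j\<in>UNIV. dx j (\<lambda>y r. \<rho> y r * u y r $ j) x s) = 0
   \<and> (\<forall>i. dt (\<lambda>y r. \<rho> y r * u y r $ i) x s
          + (\<Sum>j\<in>UNIV. dx j (\<lambda>y r. \<rho> y r * u y r $ i * u y r $ j) x s)
          + dx i p x s = 0)
   \<and> dt (rhoE \<gamma> \<epsilon> \<rho> u p) x s
       + (\<Sum>j\<in>UNIV. dx j (\<lambda>y r. (rhoE \<gamma> \<epsilon> \<rho> u p y r + Pi_aux \<epsilon> p y r) * u y r $ j) x s) = 0)"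

end

theory Submission
  imports Defs
begin

text \<open>At time \<open>t\<close> the well-prepared data turn the mass equation into \<open>\<rho>\<^sub>t + u\<cdot>\<nabla>\<rho> = 0\<close> and the
  momentum equation into \<open>\<rho> (u\<^sub>t + (u\<cdot>\<nabla>)u) = 0\<close>. Since \<open>p\<^sub>\<infinity>\<close> does not depend on \<open>x\<close>,
  \<open>\<nabla>\<Pi> = \<epsilon>\<^sup>2\<nabla>p = 0\<close>, and inserting both identities into the energy equation leaves
  \<open>p\<^sub>t/(\<gamma>-1) = 0\<close> everywhere. So \<open>p(\<cdot>,t)\<close> is stationary to first order in time as well as
  constant in space; controlling the mixed difference of \<open>p\<close> by the mean value theorem (in time, in
  space, and in time again, the last step starting from \<open>\<partial>\<^sub>i\<partial>\<^sub>tp(\<cdot>,t) = 0\<close>) gives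
  \<open>|\<partial>\<^sub>ip(x,t+\<Delta>t)| \<le> M \<Delta>t\<^sup>2\<close> without commuting derivatives. The divergence of \<open>u\<close> is
  differentiable in time and vanishes at \<open>t\<close>, hence is \<open>O(\<Delta>t)\<close>.\<close>

lemma iter_partial_append: "iter_partial (ds @ ds') f = iter_partial ds (iter_partial ds' f)"
proof (induction ds arbitrary: f)
  case (Cons d ds)
  then show ?case by (cases d) auto
qed simp

lemma smooth_on_iter_partial: "smooth_on I f \<Longrightarrow> smooth_on I (iter_partial ds f)"
  unfolding smooth_on_def by (metis iter_partial_append)

lemma smooth_on_dx: "smooth_on I f \<Longrightarrow> smooth_on I (dx i f)"
  using smooth_on_iter_partial[of I f "[Some i]"] by simp

lemma smooth_on_dt: "smooth_on I f \<Longrightarrow> smooth_on I (dt f)"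
  using smooth_on_iter_partial[of I f "[None]"] by simp

lemma smooth_on_imp_differentiable:
  "smooth_on I f \<Longrightarrow> s \<in> I \<Longrightarrow> (\<lambda>z. f (fst z) (snd z)) differentiable (at (x, s))"
  unfolding smooth_on_def by (metis iter_partial.simps(1))

lemma has_real_derivative_dx_axis:
  assumes "smooth_on I f" "s \<in> I"
  shows "((\<lambda>h. f (y + h *\<^sub>R axis i 1) s) has_real_derivative dx i f (y + h0 *\<^sub>R axis i 1) s) (at h0)"
proof -
  let ?F = "\<lambda>h. f (y + h *\<^sub>R axis i 1) s"
  have "(\<lambda>h. (y + h *\<^sub>R axis i 1, s)) differentiable (at h0)"
    by (auto intro!: derivative_intros)
  with smooth_on_imp_differentiable[OF assms] have "?F differentiable (at h0)"
    using differentiable_chain_at[of "\<lambda>h. (y + h *\<^sub>R axis i 1, s)" h0 "\<lambda>z. f (fst z) (snd z)"]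
    by (simp add: o_def)
  hence F': "(?F has_real_derivative deriv ?F h0) (at h0)"
    using DERIV_deriv_iff_real_differentiable by blast
  have "(\<lambda>h. f (y + h0 *\<^sub>R axis i 1 + h *\<^sub>R axis i 1) s) = (\<lambda>h. ?F (h + h0))"
    by (simp add: algebra_simps scaleR_add_left)
  moreover have "((\<lambda>h. ?F (h + h0)) has_real_derivative deriv ?F h0) (at 0)"
    using DERIV_shift[of ?F "deriv ?F h0" 0 h0] F' by simp
  ultimately have "dx i f (y + h0 *\<^sub>R axis i 1) s = deriv ?F h0"
    unfolding dx_def by (metis DERIV_imp_deriv)
  with F' show ?thesis by simp
qed

lemma has_real_derivative_dx:
  "smooth_on I f \<Longrightarrow> s \<in> I \<Longrightarrow> ((\<lambda>h. f (y + h *\<^sub>R axis i 1) s) has_real_derivative dx i f y s) (at 0)"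
  using has_real_derivative_dx_axis[of I f s y i 0] by simp

lemma has_real_derivative_dt:
  assumes "smooth_on I f" "s \<in> I"
  shows "((\<lambda>r. f y r) has_real_derivative dt f y s) (at s)"
proof -
  have "(\<lambda>r. (y, r)) differentiable (at s)"
    by (auto intro!: derivative_intros)
  with smooth_on_imp_differentiable[OF assms] have "(\<lambda>r. f y r) differentiable (at s)"
    using differentiable_chain_at[of "\<lambda>r. (y, r)" s "\<lambda>z. f (fst z) (snd z)"]
    by (simp add: o_def)
  thus ?thesis
    unfolding dt_def using DERIV_deriv_iff_real_differentiable by blast
qed

lemma has_real_derivative_dt_shift:
  "smooth_on I f \<Longrightarrow> t + b \<in> I \<Longrightarrow> ((\<lambda>b. f y (t + b)) has_real_derivative dt f y (t + b)) (at b)"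
  using has_real_derivative_dt[of I f "t + b" y] DERIV_shift[of "\<lambda>r. f y r" "dt f y (t + b)" b t]
  by (simp add: add.commute)

lemma dx_eqI: "((\<lambda>h. f (y + h *\<^sub>R axis i 1) s) has_real_derivative D) (at 0) \<Longrightarrow> dx i f y s = D"
  unfolding dx_def by (rule DERIV_imp_deriv)

lemma dt_eqI: "((\<lambda>r. f y r) has_real_derivative D) (at s) \<Longrightarrow> dt f y s = D"
  unfolding dt_def by (rule DERIV_imp_deriv)

lemma has_real_derivative_total_energy:
  fixes P R :: "real \<Rightarrow> real" and V :: "real \<Rightarrow> real^'d::finite"
  assumes "(P has_real_derivative P') (at a)" "(R has_real_derivative R') (at a)"
    and "\<And>k. ((\<lambda>s. V s $ k) has_real_derivative V' k) (at a)"
  shows "((\<lambda>s. P s / (\<gamma> - 1) + \<epsilon>\<^sup>2 / 2 * R s * (norm (V s))\<^sup>2) has_real_derivative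
      P' / (\<gamma> - 1) + \<epsilon>\<^sup>2 / 2 * (R' * (norm (V a))\<^sup>2 + R a * (\<Sum>k\<in>UNIV. 2 * V a $ k * V' k))) (at a)"
proof -
  have norm_sq: "(norm v)\<^sup>2 = (\<Sum>k\<in>UNIV. (v $ k)\<^sup>2)" for v :: "real^'d"
    unfolding dot_square_norm[symmetric] inner_vec_def by (simp add: power2_eq_square)
  have "((\<lambda>s. \<Sum>k\<in>UNIV. (V s $ k)\<^sup>2) has_real_derivative (\<Sum>k\<in>UNIV. 2 * V a $ k * V' k)) (at a)"
    by (auto intro!: derivative_eq_intros assms(3) simp: mult_ac)
  from DERIV_add[OF DERIV_cdivide[OF assms(1), of "\<gamma> - 1"]
      DERIV_cmult[OF DERIV_mult[OF assms(2) this], of "\<epsilon>\<^sup>2 / 2"]]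
  show ?thesis
    unfolding norm_sq by (simp add: algebra_simps)
qed

lemma dt_rhoE:
  fixes \<rho> p :: "real^'d::finite \<Rightarrow> real \<Rightarrow> real" and u :: "real^'d \<Rightarrow> real \<Rightarrow> real^'d"
  assumes "t \<in> I" "smooth_on I \<rho>" "smooth_on I p" "\<And>k. smooth_on I (\<lambda>y r. u y r $ k)"
  shows "dt (rhoE \<gamma> \<epsilon> \<rho> u p) y t = dt p y t / (\<gamma> - 1) + \<epsilon>\<^sup>2 / 2 * (dt \<rho> y t * (norm (u y t))\<^sup>2
      + \<rho> y t * (\<Sum>k\<in>UNIV. 2 * u y t $ k * dt (\<lambda>y r. u y r $ k) y t))"
  unfolding rhoE_def using assms
  by (intro dt_eqI has_real_derivative_total_energy has_real_derivative_dt)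

lemma dx_energy_flux:
  fixes \<rho> p :: "real^'d::finite \<Rightarrow> real \<Rightarrow> real" and u :: "real^'d \<Rightarrow> real \<Rightarrow> real^'d"
  assumes t: "t \<in> I" and s\<rho>: "smooth_on I \<rho>" and sp: "smooth_on I p"
    and su: "\<And>k. smooth_on I (\<lambda>y r. u y r $ k)" and px: "dx j p y t = 0"
  shows "dx j (\<lambda>y r. (rhoE \<gamma> \<epsilon> \<rho> u p y r + Pi_aux \<epsilon> p y r) * u y r $ j) y t
    = \<epsilon>\<^sup>2 / 2 * (dx j \<rho> y t * (norm (u y t))\<^sup>2
        + \<rho> y t * (\<Sum>k\<in>UNIV. 2 * u y t $ k * dx j (\<lambda>y r. u y r $ k) y t)) * u y t $ j
      + (rhoE \<gamma> \<epsilon> \<rho> u p y t + Pi_aux \<epsilon> p y t) * dx j (\<lambda>y r. u y r $ j) y t"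
proof -
  let ?line = "\<lambda>h. y + h *\<^sub>R axis j 1"
  have p': "((\<lambda>h. p (?line h) t) has_real_derivative 0) (at 0)"
    using has_real_derivative_dx[OF sp t, of y j] unfolding px .
  have energy: "((\<lambda>h. rhoE \<gamma> \<epsilon> \<rho> u p (?line h) t) has_real_derivative
      \<epsilon>\<^sup>2 / 2 * (dx j \<rho> y t * (norm (u y t))\<^sup>2
        + \<rho> y t * (\<Sum>k\<in>UNIV. 2 * u y t $ k * dx j (\<lambda>y r. u y r $ k) y t))) (at 0)"
    unfolding rhoE_def using has_real_derivative_total_energy[OF p' has_real_derivative_dx[OF s\<rho> t]
      has_real_derivative_dx[OF su t]] by simp
  have Pi: "((\<lambda>h. Pi_aux \<epsilon> p (?line h) t) has_real_derivative 0) (at 0)"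
    unfolding Pi_aux_def by (auto intro!: derivative_eq_intros p')
  show ?thesis
    by (rule dx_eqI)
      (use DERIV_mult[OF DERIV_add[OF energy Pi] has_real_derivative_dx[OF su t]] in \<open>simp add: algebra_simps\<close>)
qed

text \<open>The balance laws at a point with \<open>div u = 0\<close> and \<open>\<nabla>p = 0\<close>, in the notation
  \<open>R = \<rho>\<close>, \<open>U = u\<close>, \<open>Rt = \<rho>\<^sub>t\<close>, \<open>Ut = u\<^sub>t\<close>, \<open>Rx j = \<partial>\<^sub>j\<rho>\<close>, \<open>Ux k j = \<partial>\<^sub>ju\<^sub>k\<close>,
  \<open>Pt = p\<^sub>t\<close>, \<open>N = |u|\<^sup>2\<close>, \<open>Q = \<rho>E + \<Pi>\<close>.\<close>
lemma pressure_rate_zero_of_balance_laws: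
  fixes \<gamma> \<epsilon> R Rt Pt N Q :: real and U Ut Rx :: "'d::finite \<Rightarrow> real" and Ux :: "'d \<Rightarrow> 'd \<Rightarrow> real"
  assumes "\<gamma> \<noteq> 1"
    and div: "(\<Sum>j\<in>UNIV. Ux j j) = 0"
    and mass: "Rt + (\<Sum>j\<in>UNIV. Rx j * U j + R * Ux j j) = 0"
    and momentum: "\<And>i. Rt * U i + R * Ut i
        + (\<Sum>j\<in>UNIV. (Rx j * U i + R * Ux i j) * U j + R * U i * Ux j j) = 0"
    and energy: "Pt / (\<gamma> - 1) + \<epsilon>\<^sup>2 / 2 * (Rt * N + R * (\<Sum>k\<in>UNIV. 2 * U k * Ut k))
        + (\<Sum>j\<in>UNIV. \<epsilon>\<^sup>2 / 2 * (Rx j * N + R * (\<Sum>k\<in>UNIV. 2 * U k * Ux k j)) * U j + Q * Ux j j) = 0"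
  shows "Pt = 0"
proof -
  define M where "M = (\<Sum>j\<in>UNIV. Rx j * U j)"
  define a where "a k = Ut k + (\<Sum>j\<in>UNIV. Ux k j * U j)" for k
  have transport: "Rt + M = 0"
    using mass div by (simp add: M_def sum.distrib flip: sum_distrib_left)
  have "Rt * U i + R * Ut i + (\<Sum>j\<in>UNIV. (Rx j * U i + R * Ux i j) * U j + R * U i * Ux j j)
      = U i * (Rt + M) + R * a i + R * U i * (\<Sum>j\<in>UNIV. Ux j j)" for i
    by (simp add: M_def a_def sum.distrib sum_distrib_left algebra_simps)
  hence acceleration: "R * a i = 0" for i
    using momentum[of i] transport div by simp
  have distributed: "(\<Sum>j\<in>UNIV. \<epsilon>\<^sup>2 / 2 * (Rx j * N + R * w j) * U j + Q * Ux j j)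
      = \<epsilon>\<^sup>2 / 2 * N * M + \<epsilon>\<^sup>2 / 2 * R * (\<Sum>j\<in>UNIV. w j * U j) + Q * (\<Sum>j\<in>UNIV. Ux j j)"
    for w :: "'d \<Rightarrow> real" \<comment> \<open>generic \<open>w\<close>, so that the simplifier leaves the inner sum alone\<close>
    by (simp add: M_def sum.distrib sum_distrib_left algebra_simps add_divide_distrib sum_divide_distrib)
  have swap: "(\<Sum>j\<in>UNIV. (\<Sum>k\<in>UNIV. 2 * U k * Ux k j) * U j)
      = (\<Sum>k\<in>UNIV. 2 * U k * (\<Sum>j\<in>UNIV. Ux k j * U j))"
  proof -
    have "(\<Sum>j\<in>UNIV. (\<Sum>k\<in>UNIV. 2 * U k * Ux k j) * U j)
        = (\<Sum>j\<in>UNIV. \<Sum>k\<in>UNIV. 2 * U k * Ux k j * U j)"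
      by (simp add: sum_distrib_right)
    also have "\<dots> = (\<Sum>k\<in>UNIV. \<Sum>j\<in>UNIV. 2 * U k * Ux k j * U j)"
      by (rule sum.swap)
    finally show ?thesis
      by (simp add: sum_distrib_left mult.assoc)
  qed
  have flux: "(\<Sum>j\<in>UNIV. \<epsilon>\<^sup>2 / 2 * (Rx j * N + R * (\<Sum>k\<in>UNIV. 2 * U k * Ux k j)) * U j + Q * Ux j j)
      = \<epsilon>\<^sup>2 / 2 * N * M + \<epsilon>\<^sup>2 / 2 * R * (\<Sum>k\<in>UNIV. 2 * U k * (\<Sum>j\<in>UNIV. Ux k j * U j))
        + Q * (\<Sum>j\<in>UNIV. Ux j j)"
    by (simp only: distributed swap)
  have kinetic: "\<epsilon>\<^sup>2 / 2 * (Rt * N + R * (\<Sum>k\<in>UNIV. 2 * U k * Ut k))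
      + \<epsilon>\<^sup>2 / 2 * R * (\<Sum>k\<in>UNIV. 2 * U k * (\<Sum>j\<in>UNIV. Ux k j * U j))
      = \<epsilon>\<^sup>2 / 2 * N * Rt + \<epsilon>\<^sup>2 * (\<Sum>k\<in>UNIV. U k * (R * a k))" (is "?kinetic = _")
    unfolding a_def by (simp add: sum.distrib sum_distrib_left algebra_simps)
  from energy have "Pt / (\<gamma> - 1) + ?kinetic + \<epsilon>\<^sup>2 / 2 * N * M + Q * (\<Sum>j\<in>UNIV. Ux j j) = 0"
    unfolding flux by (simp add: algebra_simps)
  hence "Pt / (\<gamma> - 1) + \<epsilon>\<^sup>2 / 2 * N * (Rt + M) + \<epsilon>\<^sup>2 * (\<Sum>k\<in>UNIV. U k * (R * a k))
      + Q * (\<Sum>j\<in>UNIV. Ux j j) = 0"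
    unfolding kinetic by (simp add: algebra_simps add_divide_distrib)
  hence "Pt / (\<gamma> - 1) = 0"
    using transport acceleration div by simp
  with assms(1) show ?thesis by simp
qed

lemma dt_pressure_eq_zero_if_well_prepared:
  fixes \<rho> p :: "real^'d::finite \<Rightarrow> real \<Rightarrow> real" and u :: "real^'d \<Rightarrow> real \<Rightarrow> real^'d"
  assumes "\<gamma> \<noteq> 1" and t: "t \<in> I"
    and s\<rho>: "smooth_on I \<rho>" and sp: "smooth_on I p" and su: "\<And>k. smooth_on I (\<lambda>y r. u y r $ k)"
    and aux: "aux_system \<gamma> \<epsilon> I \<rho> u p"
    and div: "div_field u y t = 0" and grad: "grad p y t = 0"
  shows "dt p y t = 0"
proof -
  define R U N where "R = \<rho> y t" and "U k = u y t $ k" and "N = (norm (u y t))\<^sup>2" for k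
  define Rx Ux where "Rx j = dx j \<rho> y t" and "Ux k j = dx j (\<lambda>y r. u y r $ k) y t" for k j
  define Rt Ut where "Rt = dt \<rho> y t" and "Ut k = dt (\<lambda>y r. u y r $ k) y t" for k
  let ?line = "\<lambda>j h. y + h *\<^sub>R axis j 1"
  have \<rho>x: "((\<lambda>h. \<rho> (?line j h) t) has_real_derivative Rx j) (at 0)" for j
    unfolding Rx_def using has_real_derivative_dx[OF s\<rho> t] .
  have ux: "((\<lambda>h. u (?line j h) t $ k) has_real_derivative Ux k j) (at 0)" for k j
    unfolding Ux_def using has_real_derivative_dx[OF su t] .
  have px0: "dx j p y t = 0" for j
    using grad by (simp add: grad_def vec_eq_iff)
  have \<rho>t: "((\<lambda>r. \<rho> y r) has_real_derivative Rt) (at t)"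
    unfolding Rt_def using has_real_derivative_dt[OF s\<rho> t] .
  have ut: "((\<lambda>r. u y r $ k) has_real_derivative Ut k) (at t)" for k
    unfolding Ut_def using has_real_derivative_dt[OF su t] .
  have mass_flux: "dx j (\<lambda>y r. \<rho> y r * u y r $ j) y t = Rx j * U j + R * Ux j j" for j
    unfolding R_def U_def by (rule dx_eqI) (auto intro!: derivative_eq_intros \<rho>x ux)
  have momentum_flux: "dx j (\<lambda>y r. \<rho> y r * u y r $ i * u y r $ j) y t
      = (Rx j * U i + R * Ux i j) * U j + R * U i * Ux j j" for i j
    unfolding R_def U_def by (rule dx_eqI) (auto intro!: derivative_eq_intros \<rho>x ux simp: algebra_simps)
  have momentum_rate: "dt (\<lambda>y r. \<rho> y r * u y r $ i) y t = Rt * U i + R * Ut i" for i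
    unfolding R_def U_def by (rule dt_eqI) (auto intro!: derivative_eq_intros \<rho>t ut)
  have energy_rate: "dt (rhoE \<gamma> \<epsilon> \<rho> u p) y t
      = dt p y t / (\<gamma> - 1) + \<epsilon>\<^sup>2 / 2 * (Rt * N + R * (\<Sum>k\<in>UNIV. 2 * U k * Ut k))"
    unfolding R_def U_def N_def Rt_def Ut_def using dt_rhoE[OF t s\<rho> sp su] .
  have energy_flux: "dx j (\<lambda>y r. (rhoE \<gamma> \<epsilon> \<rho> u p y r + Pi_aux \<epsilon> p y r) * u y r $ j) y t
      = \<epsilon>\<^sup>2 / 2 * (Rx j * N + R * (\<Sum>k\<in>UNIV. 2 * U k * Ux k j)) * U j
        + (rhoE \<gamma> \<epsilon> \<rho> u p y t + Pi_aux \<epsilon> p y t) * Ux j j" for j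
    unfolding R_def U_def N_def Rx_def Ux_def using dx_energy_flux[OF t s\<rho> sp su px0] .
  have "(\<Sum>j\<in>UNIV. Ux j j) = 0"
    using div unfolding div_field_def Ux_def .
  moreover from aux t have "dt \<rho> y t + (\<Sum>j\<in>UNIV. dx j (\<lambda>y r. \<rho> y r * u y r $ j) y t) = 0"
    and "\<And>i. dt (\<lambda>y r. \<rho> y r * u y r $ i) y t
      + (\<Sum>j\<in>UNIV. dx j (\<lambda>y r. \<rho> y r * u y r $ i * u y r $ j) y t) + dx i p y t = 0"
    and "dt (rhoE \<gamma> \<epsilon> \<rho> u p) y t
      + (\<Sum>j\<in>UNIV. dx j (\<lambda>y r. (rhoE \<gamma> \<epsilon> \<rho> u p y r + Pi_aux \<epsilon> p y r) * u y r $ j) y t) = 0"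
    unfolding aux_system_def by blast+
  ultimately show ?thesis
    unfolding mass_flux momentum_flux momentum_rate energy_rate energy_flux px0 add_0_right Rt_def[symmetric]
    by (rule pressure_rate_zero_of_balance_laws[OF assms(1)])
qed

lemma MVT_from_zero:
  fixes f :: "real \<Rightarrow> real"
  assumes "\<And>z. \<bar>z\<bar> \<le> \<bar>k\<bar> \<Longrightarrow> (f has_real_derivative f' z) (at z)"
  shows "\<exists>\<eta>. \<bar>\<eta>\<bar> \<le> \<bar>k\<bar> \<and> f k - f 0 = k * f' \<eta>"
proof (cases k "0::real" rule: linorder_cases)
  case less
  then obtain z where "k < z" "z < 0" "f 0 - f k = (0 - k) * f' z"
    using MVT2[of k 0 f f'] assms by force
  thus ?thesis by (intro exI[of _ z]) (auto simp: algebra_simps)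
next
  case greater
  then obtain z where "0 < z" "z < k" "f k - f 0 = (k - 0) * f' z"
    using MVT2[of 0 k f f'] assms by force
  thus ?thesis by (intro exI[of _ z]) auto
qed auto

lemma vanishing_DERIV_imp_bigo:
  fixes f :: "real \<Rightarrow> real"
  assumes "(f has_real_derivative D) (at 0)" "f 0 = 0"
  shows "f \<in> O[at 0](\<lambda>h. h)"
proof -
  have "((\<lambda>h. f h / h) \<longlongrightarrow> D) (at 0)"
    using assms(1) unfolding has_field_derivative_iff by (simp add: assms(2))
  hence "\<forall>\<^sub>F h in at 0. dist (f h / h) D < 1"
    using tendstoD by force
  moreover have "\<forall>\<^sub>F h in at (0::real). h \<noteq> 0"
    by (simp add: eventually_at_filter)
  ultimately have "\<forall>\<^sub>F h in at 0. norm (f h) \<le> (\<bar>D\<bar> + 1) * norm h"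
  proof eventually_elim
    case (elim h)
    hence "\<bar>f h\<bar> / \<bar>h\<bar> \<le> \<bar>D\<bar> + 1"
      by (simp add: dist_real_def abs_divide)
    with elim(2) show ?case by (simp add: divide_le_eq)
  qed
  thus ?thesis by (rule bigoI)
qed

lemma DERIV_abs_le_if_linear_bound:
  fixes \<phi> :: "real \<Rightarrow> real"
  assumes "(\<phi> has_real_derivative D) (at 0)" "\<phi> 0 = 0" "\<forall>\<^sub>F h in at 0. \<bar>\<phi> h\<bar> \<le> C * \<bar>h\<bar>"
  shows "\<bar>D\<bar> \<le> C"
proof (rule tendsto_upperbound)
  show "((\<lambda>h. \<bar>\<phi> h / h\<bar>) \<longlongrightarrow> \<bar>D\<bar>) (at 0)"
    using tendsto_rabs[of "\<lambda>h. \<phi> h / h"] assms(1)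
    unfolding has_field_derivative_iff by (simp add: assms(2))
  have "\<forall>\<^sub>F h in at (0::real). h \<noteq> 0"
    by (simp add: eventually_at_filter)
  with assms(3) show "\<forall>\<^sub>F h in at 0. \<bar>\<phi> h / h\<bar> \<le> C"
    by eventually_elim (simp add: abs_divide divide_le_eq)
qed simp

lemma smooth_on_locally_bounded:
  assumes "open I" "t \<in> I" "smooth_on I f"
  shows "\<exists>M r. 0 < r \<and> (\<forall>b. \<bar>b\<bar> < r \<longrightarrow> t + b \<in> I)
    \<and> (\<forall>a b. \<bar>a\<bar> < r \<longrightarrow> \<bar>b\<bar> < r \<longrightarrow> \<bar>f (x + a *\<^sub>R axis i 1) (t + b)\<bar> \<le> M)"
proof -
  have "continuous (at (x, t)) (\<lambda>z. f (fst z) (snd z))"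
    using smooth_on_imp_differentiable[OF assms(3,2)] differentiable_imp_continuous_within by blast
  then obtain d1 where "d1 > 0" and d1: "\<And>z. dist z (x, t) < d1 \<Longrightarrow> dist (f (fst z) (snd z)) (f x t) < 1"
    unfolding continuous_at_eps_delta by (metis fst_conv snd_conv zero_less_one)
  obtain d2 where "d2 > 0" "ball t d2 \<subseteq> I"
    using assms(1,2) open_contains_ball by blast
  define r where "r = min d1 d2 / 2"
  have "\<bar>f (x + a *\<^sub>R axis i 1) (t + b)\<bar> \<le> \<bar>f x t\<bar> + 1" if "\<bar>a\<bar> < r" "\<bar>b\<bar> < r" for a b
  proof -
    have "dist (x + a *\<^sub>R axis i 1, t + b) (x, t) \<le> \<bar>a\<bar> + \<bar>b\<bar>"
      using norm_Pair_le[of "a *\<^sub>R axis i (1::real)" b] by (simp add: dist_norm)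
    also have "\<dots> < d1"
      using that unfolding r_def by linarith
    finally show ?thesis
      using d1 by (fastforce simp: dist_real_def)
  qed
  moreover have "t + b \<in> I" if "\<bar>b\<bar> < r" for b
    using that \<open>ball t d2 \<subseteq> I\<close> unfolding r_def by (auto simp: dist_real_def subset_iff)
  ultimately show ?thesis
    using \<open>d1 > 0\<close> \<open>d2 > 0\<close> unfolding r_def by (metis min_def half_gt_zero)
qed

lemma mixed_difference_bound:
  fixes p :: "real^'d::finite \<Rightarrow> real \<Rightarrow> real"
  assumes "open I" and t: "t \<in> I" and sp: "smooth_on I p" and pt: "\<And>y. dt p y t = 0"
  shows "\<exists>M r. 0 < r \<and> (\<forall>b. \<bar>b\<bar> < r \<longrightarrow> t + b \<in> I) \<and> (\<forall>h k. \<bar>h\<bar> < r \<longrightarrow> \<bar>k\<bar> < r \<longrightarrow>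
    \<bar>(p (x + h *\<^sub>R axis i 1) (t + k) - p x (t + k)) - (p (x + h *\<^sub>R axis i 1) t - p x t)\<bar>
      \<le> \<bar>h\<bar> * (M * k\<^sup>2))"
proof -
  define e where "e = axis i (1::real)"
  have s1: "smooth_on I (dt p)" and s2: "smooth_on I (dx i (dt p))"
    using smooth_on_dt[OF sp] smooth_on_dx[OF smooth_on_dt[OF sp]] .
  obtain M r where "0 < r" and inI: "\<And>b. \<bar>b\<bar> < r \<Longrightarrow> t + b \<in> I"
    and M: "\<And>a b. \<bar>a\<bar> < r \<Longrightarrow> \<bar>b\<bar> < r \<Longrightarrow> \<bar>dt (dx i (dt p)) (x + a *\<^sub>R e) (t + b)\<bar> \<le> M"
    using smooth_on_locally_bounded[OF assms(1) t smooth_on_dt[OF s2], of x i] unfolding e_def by blast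
  have "\<bar>(p (x + h *\<^sub>R e) (t + k) - p x (t + k)) - (p (x + h *\<^sub>R e) t - p x t)\<bar> \<le> \<bar>h\<bar> * (M * k\<^sup>2)"
    if hk: "\<bar>h\<bar> < r" "\<bar>k\<bar> < r" for h k
  proof -
    have "\<exists>\<eta>. \<bar>\<eta>\<bar> \<le> \<bar>k\<bar> \<and> (p (x + h *\<^sub>R e) (t + k) - p x (t + k)) - (p (x + h *\<^sub>R e) (t + 0) - p x (t + 0))
        = k * (dt p (x + h *\<^sub>R e) (t + \<eta>) - dt p x (t + \<eta>))"
      by (rule MVT_from_zero, rule DERIV_diff; rule has_real_derivative_dt_shift[OF sp inI]) (use hk in auto)
    then obtain \<eta> where \<eta>: "\<bar>\<eta>\<bar> \<le> \<bar>k\<bar>"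
      and time: "(p (x + h *\<^sub>R e) (t + k) - p x (t + k)) - (p (x + h *\<^sub>R e) t - p x t)
        = k * (dt p (x + h *\<^sub>R e) (t + \<eta>) - dt p x (t + \<eta>))"
      by auto
    have "\<bar>\<eta>\<bar> < r" using \<eta> hk by linarith
    have "\<exists>\<xi>. \<bar>\<xi>\<bar> \<le> \<bar>h\<bar> \<and> dt p (x + h *\<^sub>R e) (t + \<eta>) - dt p (x + 0 *\<^sub>R e) (t + \<eta>)
        = h * dx i (dt p) (x + \<xi> *\<^sub>R e) (t + \<eta>)"
      unfolding e_def by (rule MVT_from_zero, rule has_real_derivative_dx_axis[OF s1 inI]) (use \<open>\<bar>\<eta>\<bar> < r\<close> in simp)
    then obtain \<xi> where \<xi>: "\<bar>\<xi>\<bar> \<le> \<bar>h\<bar>"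
      and space: "dt p (x + h *\<^sub>R e) (t + \<eta>) - dt p x (t + \<eta>) = h * dx i (dt p) (x + \<xi> *\<^sub>R e) (t + \<eta>)"
      by auto
    have "\<exists>\<eta>'. \<bar>\<eta>'\<bar> \<le> \<bar>\<eta>\<bar> \<and> dx i (dt p) (x + \<xi> *\<^sub>R e) (t + \<eta>) - dx i (dt p) (x + \<xi> *\<^sub>R e) (t + 0)
        = \<eta> * dt (dx i (dt p)) (x + \<xi> *\<^sub>R e) (t + \<eta>')"
      by (rule MVT_from_zero, rule has_real_derivative_dt_shift[OF s2 inI]) (use \<open>\<bar>\<eta>\<bar> < r\<close> in auto)
    moreover have "dx i (dt p) z t = 0" for z
      unfolding dx_def pt by simp
    ultimately obtain \<eta>' where \<eta>': "\<bar>\<eta>'\<bar> \<le> \<bar>\<eta>\<bar>"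
      and time': "dx i (dt p) (x + \<xi> *\<^sub>R e) (t + \<eta>) = \<eta> * dt (dx i (dt p)) (x + \<xi> *\<^sub>R e) (t + \<eta>')"
      by auto
    define D where "D = dt (dx i (dt p)) (x + \<xi> *\<^sub>R e) (t + \<eta>')"
    have "\<bar>D\<bar> \<le> M"
      unfolding D_def using M \<xi> \<eta>' \<open>\<bar>\<eta>\<bar> < r\<close> hk by simp
    have "\<bar>k * (h * (\<eta> * D))\<bar> = \<bar>h\<bar> * (\<bar>k\<bar> * \<bar>\<eta>\<bar> * \<bar>D\<bar>)"
      by (simp add: abs_mult mult_ac)
    also have "\<dots> \<le> \<bar>h\<bar> * (\<bar>k\<bar> * \<bar>k\<bar> * M)"
      by (intro mult_left_mono mult_mono) (use \<eta> \<open>\<bar>D\<bar> \<le> M\<close> in auto)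
    also have "\<dots> = \<bar>h\<bar> * (M * k\<^sup>2)"
      by (simp add: power2_eq_square abs_mult_self_eq)
    finally show ?thesis
      unfolding time space time' D_def .
  qed
  with \<open>0 < r\<close> inI show ?thesis unfolding e_def by blast
qed

lemma dx_bigo_square_if_dt_vanishes:
  fixes p :: "real^'d::finite \<Rightarrow> real \<Rightarrow> real"
  assumes "open I" "t \<in> I" "smooth_on I p" "\<And>y. dt p y t = 0" and dx0: "dx i p x t = 0"
  shows "(\<lambda>k. dx i p x (t + k)) \<in> O[at 0](\<lambda>k. k\<^sup>2)"
proof -
  obtain M r where "0 < r" and inI: "\<And>b. \<bar>b\<bar> < r \<Longrightarrow> t + b \<in> I" and M: "\<And>h k. \<bar>h\<bar> < r \<Longrightarrow> \<bar>k\<bar> < r \<Longrightarrow>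
      \<bar>(p (x + h *\<^sub>R axis i 1) (t + k) - p x (t + k)) - (p (x + h *\<^sub>R axis i 1) t - p x t)\<bar>
        \<le> \<bar>h\<bar> * (M * k\<^sup>2)"
    using mixed_difference_bound[OF assms(1-4)] by blast
  have "\<bar>dx i p x (t + k)\<bar> \<le> M * k\<^sup>2" if "\<bar>k\<bar> < r" for k
  proof -
    have "((\<lambda>h. (p (x + h *\<^sub>R axis i 1) (t + k) - p x (t + k)) - (p (x + h *\<^sub>R axis i 1) t - p x t))
        has_real_derivative dx i p x (t + k) - dx i p x t) (at 0)"
      using has_real_derivative_dx[OF assms(3)] inI[OF that] assms(2)
      by (auto intro!: derivative_eq_intros)
    moreover have "\<forall>\<^sub>F h in at 0.
        \<bar>(p (x + h *\<^sub>R axis i 1) (t + k) - p x (t + k)) - (p (x + h *\<^sub>R axis i 1) t - p x t)\<bar>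
          \<le> M * k\<^sup>2 * \<bar>h\<bar>"
      unfolding eventually_at using \<open>0 < r\<close> M[OF _ that] by (auto simp: dist_real_def mult.commute)
    ultimately show ?thesis
      using DERIV_abs_le_if_linear_bound dx0 by fastforce
  qed
  hence "\<forall>\<^sub>F k in at 0. norm (dx i p x (t + k)) \<le> M * norm (k\<^sup>2)"
    unfolding eventually_at using \<open>0 < r\<close> by (auto simp: dist_real_def)
  thus ?thesis by (rule bigoI)
qed

lemma norm_grad_le_sum: "norm (grad f x s) \<le> (\<Sum>i\<in>UNIV. \<bar>dx i f x s\<bar>)"
  using norm_le_l1_cart[of "grad f x s"] by (simp add: grad_def)

theorem proposition2p1:
  fixes \<gamma> \<epsilon> t :: real and I :: "real set"
    and \<rho> p :: "real^'d::finite \<Rightarrow> real \<Rightarrow> real" and u :: "real^'d \<Rightarrow> real \<Rightarrow> real^'d"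
  assumes "0 < \<epsilon>" "\<epsilon> \<le> 1" "\<gamma> > 1"
    and "open I" "t \<in> I"
    and "smooth_on I \<rho>" "smooth_on I p" "\<forall>i. smooth_on I (\<lambda>y r. u y r $ i)"
    and "aux_system \<gamma> \<epsilon> I \<rho> u p"
    and "\<forall>x. div_field u x t = 0"
    and "\<forall>x. grad p x t = 0"
  shows "\<forall>x. (\<lambda>h. div_field u x (t + h)) \<in> O[at 0](\<lambda>h. h)
            \<and> (\<lambda>h. norm (grad p x (t + h))) \<in> O[at 0](\<lambda>h. h\<^sup>2)"
proof
  fix x
  have dx_p: "dx i p y t = 0" for i y
    using assms(11) by (simp add: grad_def vec_eq_iff)
  have dt_p: "dt p y t = 0" for y
    using assms(3,8,10,11)
    by (intro dt_pressure_eq_zero_if_well_prepared[OF _ assms(5-7) _ assms(9)]) auto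
  have "((\<lambda>h. div_field u x (t + h)) has_real_derivative
      (\<Sum>j\<in>UNIV. dt (dx j (\<lambda>y r. u y r $ j)) x (t + 0))) (at 0)"
    unfolding div_field_def using assms(5,8)
    by (intro DERIV_sum has_real_derivative_dt_shift smooth_on_dx) auto
  hence "(\<lambda>h. div_field u x (t + h)) \<in> O[at 0](\<lambda>h. h)"
    by (rule vanishing_DERIV_imp_bigo) (use assms(10) in simp)
  moreover have "(\<lambda>h. \<Sum>i\<in>UNIV. \<bar>dx i p x (t + h)\<bar>) \<in> O[at 0](\<lambda>h. h\<^sup>2)"
    using dx_bigo_square_if_dt_vanishes[OF assms(4,5,7) dt_p dx_p] by (intro big_sum_in_bigo) simp
  moreover have "(\<lambda>h. norm (grad p x (t + h))) \<in> O[at 0](\<lambda>h. \<Sum>i\<in>UNIV. \<bar>dx i p x (t + h)\<bar>)"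
    by (intro bigoI[where c = 1] always_eventually allI) (simp add: norm_grad_le_sum)
  ultimately show "(\<lambda>h. div_field u x (t + h)) \<in> O[at 0](\<lambda>h. h)
      \<and> (\<lambda>h. norm (grad p x (t + h))) \<in> O[at 0](\<lambda>h. h\<^sup>2)"
    using landau_o.big_trans by blast
qed

end
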